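(* Let $g_1,g_2$ be monic divisors of $x^m-1$, $v_1,v_2\in\mathcal{R}$ with $\gcd(v_1v_2-1,x^m-1)=1$, and let $\mathcal{C}$ be the QC code of length $2m$ generated by $(g_1,v_1g_1)$ and $(v_2g_2,g_2)$. Then: (A) over $\mathbb{F}_q$, the Euclidean dual $\mathcal{C}^{\perp_E}$ is the QC code generated by $(g_1^{\perp},-\overline{v_2}g_1^{\perp})$ and $(-\overline{v_1}g_2^{\perp},g_2^{\perp})$; (B) over $\mathbb{F}_{q^2}$, the Hermitian dual $\mathcal{C}^{\perp_H}$ is the QC code generated by $(g_1^{\perp_H},-\overline{v_2}^{[q]}g_1^{\perp_H})$ and $(-\overline{v_1}^{[q]}g_2^{\perp_H},g_2^{\perp_H})$; (C) over $\mathbb{F}_q$, the symplectic dual $\mathcal{C}^{\perp_S}$ is the QC code generated by $(g_2^{\perp},\overline{v_1}g_2^{\perp})$ and $(\overline{v_2}g_1^{\perp},g_1^{\perp})$.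
   Context: $q$ a prime power; $\mathcal{R}=\mathbb{F}[x]/(x^m-1)$ with $\mathbb{F}$ as indicated; elements identified with representatives of degree $<m$; $[k]=(k_0,\dots,k_{m-1})$; $\overline{k}(x)=k(x^{-1})\bmod(x^m-1)$; $k^{[q]}=\sum k_i^qx^i$; for a nonzero polynomial $f$, $f^*(x)=x^{\deg f}f(1/x)$; for $k\in\mathcal{R}$, with $f=\frac{x^m-1}{\gcd(k,x^m-1)}$, $k^{\perp}=f(0)^{-1}f^*$, and $k^{\perp_H}=(k^{[q]})^{\perp}$. The QC code generated by $(u_{i1},u_{i2})$, $i=1,2$, is $\{([r_1u_{11}+r_2u_{21}],[r_1u_{12}+r_2u_{22}]):r_1,r_2\in\mathcal{R}\}\subseteq\mathbb{F}^{2m}$. Inner products: Euclidean $\sum u_iv_i$; Hermitian $\sum u_i^qv_i$; symplectic on $\mathbb{F}^{2m}$: $\sum_{i=1}^m(u_iv_{m+i}-u_{m+i}v_i)$; duals are the orthogonal complements w.r.t. these forms. *)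

theory Defs
  imports "HOL-Computational_Algebra.Computational_Algebra" "HOL-Library.Cardinality"
begin

definition xm1 :: "nat \<Rightarrow> 'a::field poly" where
  "xm1 m = monom 1 m - 1"

definition red :: "nat \<Rightarrow> 'a::field poly \<Rightarrow> 'a poly" where
  "red m p = p mod xm1 m"

definition coeff_vec :: "nat \<Rightarrow> 'a::zero poly \<Rightarrow> 'a list" where
  "coeff_vec m k = map (coeff k) [0..<m]"

text \<open>Conjugation: k(x^{-1}) mod (x^m - 1).\<close>
definition bar :: "nat \<Rightarrow> 'a::field poly \<Rightarrow> 'a poly" where
  "bar m k = (\<Sum>i<m. monom (coeff (red m k) i) ((m - i) mod m))"

definition frob :: "nat \<Rightarrow> 'a::field poly \<Rightarrow> 'a poly" where
  "frob q k = map_poly (\<lambda>c. c ^ q) k"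

definition perp :: "nat \<Rightarrow> 'a::field_gcd poly \<Rightarrow> 'a poly" where
  "perp m k = (let f = xm1 m div gcd k (xm1 m)
               in smult (inverse (coeff f 0)) (reflect_poly f))"

definition perpH :: "nat \<Rightarrow> nat \<Rightarrow> 'a::field_gcd poly \<Rightarrow> 'a poly" where
  "perpH q m k = perp m (frob q k)"

definition qc_code :: "nat \<Rightarrow> 'a::field poly \<Rightarrow> 'a poly \<Rightarrow> 'a poly \<Rightarrow> 'a poly \<Rightarrow> 'a list set" where
  "qc_code m u11 u12 u21 u22 =
     {coeff_vec m (red m (r1 * u11 + r2 * u21)) @ coeff_vec m (red m (r1 * u12 + r2 * u22)) | r1 r2. True}"

definition euclid_ip :: "nat \<Rightarrow> 'a::field list \<Rightarrow> 'a list \<Rightarrow> 'a" where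
  "euclid_ip m u v = (\<Sum>i<2*m. u ! i * v ! i)"

definition herm_ip :: "nat \<Rightarrow> nat \<Rightarrow> 'a::field list \<Rightarrow> 'a list \<Rightarrow> 'a" where
  "herm_ip q m u v = (\<Sum>i<2*m. (u ! i) ^ q * v ! i)"

definition symp_ip :: "nat \<Rightarrow> 'a::field list \<Rightarrow> 'a list \<Rightarrow> 'a" where
  "symp_ip m u v = (\<Sum>i<m. u ! i * v ! (m + i) - u ! (m + i) * v ! i)"

definition dual :: "nat \<Rightarrow> ('a list \<Rightarrow> 'a list \<Rightarrow> 'a::field) \<Rightarrow> 'a list set \<Rightarrow> 'a list set" where
  "dual m B C = {v. length v = 2 * m \<and> (\<forall>u\<in>C. B u v = 0)}"

end

theory Submission
  imports Defs "HOL-Number_Theory.Cong" "HOL-Algebra.Sylow"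
begin

text \<open>
  Identify \<open>F\<^sup>2\<^sup>m\<close> with pairs of elements of \<open>R = F[x]/(x\<^sup>m - 1)\<close>. The Euclidean pairing
  of \<open>[a]\<close> and \<open>[b]\<close> is the constant term of \<open>a \<cdot> b(x\<^sup>-\<^sup>1)\<close>, and this constant-term pairing
  is non-degenerate, so a word \<open>(b\<^sub>1, b\<^sub>2)\<close> is orthogonal to the code iff the generator matrix
  \<open>[[g\<^sub>1, v\<^sub>1 g\<^sub>1], [v\<^sub>2 g\<^sub>2, g\<^sub>2]]\<close> kills the conjugate pair \<open>(b\<^sub>1(x\<^sup>-\<^sup>1), b\<^sub>2(x\<^sup>-\<^sup>1))\<close>. The
  annihilator of a monic divisor \<open>g\<close> of \<open>x\<^sup>m - 1\<close> is generated by the cofactor \<open>(x\<^sup>m - 1)/g\<close>,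
  whose conjugate is \<open>perp m g\<close> up to a unit, and \<open>[[1, v\<^sub>1], [v\<^sub>2, 1]]\<close> is invertible in \<open>R\<close>
  because its determinant \<open>1 - v\<^sub>1 v\<^sub>2\<close> is. The symplectic form is the Euclidean form after \<open>(b\<^sub>1, b\<^sub>2) \<mapsto> (b\<^sub>2, -b\<^sub>1)\<close>, and over
  a field with \<open>q\<^sup>2\<close> elements the Hermitian form is the Euclidean form after the coefficientwise
  Frobenius \<open>c \<mapsto> c\<^sup>q\<close>, a ring automorphism fixing \<open>x\<^sup>m - 1\<close>.
\<close>


section \<open>Reduction modulo \<open>x\<^sup>m - 1\<close>\<close>

lemma degree_xm1 [simp]: "m > 0 \<Longrightarrow> degree (xm1 m :: 'a::field poly) = m"
proof -
  assume "m > 0"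
  then have "degree (monom 1 m + (- 1) :: 'a poly) = m"
    by (subst degree_add_eq_left) (simp_all add: degree_monom_eq)
  then show ?thesis
    by (simp add: xm1_def)
qed

lemma red_eq_self: "degree p < m \<Longrightarrow> red m (p :: 'a::field poly) = p"
  unfolding red_def by (rule mod_poly_less) (simp add: le_less_trans[OF le0])

lemma degree_red_less: "m > 0 \<Longrightarrow> degree (red m (p :: 'a::field poly)) < m"
  unfolding red_def
  by (metis degree_0 degree_mod_less degree_xm1 gr_implies_not0)

lemma red_eq_iff_cong: "red m a = red m b \<longleftrightarrow> [a = b] (mod xm1 m)"
  by (simp add: red_def cong_def)

lemma red_eq_0_iff_cong: "red m a = 0 \<longleftrightarrow> [a = 0] (mod xm1 m)"
  by (simp add: red_def cong_def)

lemma cong_red: "[red m a = a] (mod xm1 m)"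
  by (simp add: red_def cong_def)

lemma red_add: "red m (p + q) = red m p + red m (q :: 'a::field poly)"
  by (simp add: red_def poly_mod_add_left)

lemma red_uminus: "red m (- p) = - red m (p :: 'a::field poly)"
  by (simp add: red_def)

lemma red_sum: "red m (sum f A) = (\<Sum>i\<in>A. red m (f i :: 'a::field poly))"
  by (induction A rule: infinite_finite_induct) (simp_all add: red_def poly_mod_add_left)

lemma cong_monom_mod: "[monom c e = monom c (e mod m)] (mod xm1 (m :: nat) :: 'a::field poly)"
proof -
  have "[monom 1 m = (1 :: 'a poly)] (mod xm1 m)"
    by (simp add: xm1_def cong_iff_dvd_diff)
  then have "[monom c (e mod m) * monom 1 m ^ (e div m) = monom c (e mod m) * 1] (mod xm1 m)"
    by (intro cong_mult cong_refl cong_pow[of _ 1, simplified])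
  moreover have "monom c (e mod m) * monom 1 m ^ (e div m) = monom c e"
    by (simp add: monom_power mult_monom)
  ultimately show ?thesis
    by (simp add: cong_sym)
qed

lemma cong_monom_monom:
  "[e = e'] (mod m) \<Longrightarrow> [monom c e = monom c e'] (mod xm1 m :: 'a::field poly)"
  using cong_monom_mod[of c e m] cong_monom_mod[of c e' m] by (simp add: cong_def)

lemma red_monom: "m > 0 \<Longrightarrow> red m (monom c e) = (monom c (e mod m) :: 'a::field poly)"
  using cong_monom_mod[of c e m] red_eq_self[of "monom c (e mod m)" m]
  by (metis degree_monom_le le_less_trans mod_less_divisor red_eq_iff_cong)

lemma sum_monom_coeff_lessThan:
  "degree p < m \<Longrightarrow> (\<Sum>i<m. monom (coeff p i) i) = p"
  using poly_as_sum_of_monoms'[of p "m - 1"] by (simp add: lessThan_Suc_atMost[symmetric])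

lemma cong_pred_mult_add_self: "(m::nat) > 0 \<Longrightarrow> [(m - 1) * i + i = 0] (mod m)"
proof -
  assume "m > 0"
  then have "(m - 1) * i + i = m * i"
    by (cases m) simp_all
  then show ?thesis
    by (simp add: cong_0_iff)
qed

lemma cong_pred_mult_add:
  assumes "(m::nat) > 0" "i \<le> d"
  shows "[(m - 1) * i + d = d - i] (mod m)"
proof -
  have "(m - 1) * i + d + i = ((m - 1) * i + i) + d"
    by simp
  also have "[\<dots> = 0 + d] (mod m)"
    by (intro cong_add cong_pred_mult_add_self assms cong_refl)
  also have "0 + d = (d - i) + i"
    using assms(2) by simp
  finally show ?thesis
    by (simp only: cong_add_rcancel_nat)
qed

lemma cong_pred_mult:
  assumes "(m::nat) > 0" "i \<le> m"
  shows "[(m - 1) * i = m - i] (mod m)"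
proof -
  have "[(m - 1) * i = (m - 1) * i + m] (mod m)"
    by (simp add: cong_def)
  also have "[(m - 1) * i + m = m - i] (mod m)"
    by (rule cong_pred_mult_add[OF assms])
  finally show ?thesis .
qed

lemma cong_pred_mult_pred: "(m::nat) > 0 \<Longrightarrow> [(m - 1) * (m - 1) = 1] (mod m)"
  using cong_pred_mult[of m "m - 1"] by simp

lemma cong_pred_mult_eq_0_iff:
  assumes "i < m" "j < (m::nat)"
  shows "[j + (m - 1) * i = 0] (mod m) \<longleftrightarrow> i = j"
proof -
  have "m > 0"
    using assms by linarith
  then have "[j + (m - 1) * i + i = j + 0] (mod m)"
    unfolding add.assoc by (intro cong_add cong_pred_mult_add_self cong_refl)
  then have "[j + (m - 1) * i + i = 0 + i] (mod m) \<longleftrightarrow> [j = i] (mod m)"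
    by (simp add: cong_def)
  also have "\<dots> \<longleftrightarrow> i = j"
    using assms cong_less_modulus_unique_nat by auto
  finally show ?thesis
    by (simp only: cong_add_rcancel_nat)
qed

section \<open>Conjugation \<open>x \<mapsto> x\<^sup>-\<^sup>1\<close>\<close>

lemma pcompose_monom: "pcompose (monom c n) p = smult c (p ^ n)"
  by (induction n) (simp_all add: monom_0 monom_Suc pcompose_pCons)

lemma pcompose_cong:
  "[X = Y] (mod N) \<Longrightarrow> [pcompose p X = pcompose p Y] (mod N :: 'a::field poly)"
  by (induction p) (simp_all add: pcompose_pCons cong_add cong_mult)

text \<open>In \<open>R\<close> one has \<open>x\<^sup>-\<^sup>1 = x\<^sup>m\<^sup>-\<^sup>1\<close>. Unlike the coefficientwise \<^const>\<open>bar\<close>, substituting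
  \<open>x\<^sup>m\<^sup>-\<^sup>1\<close> for \<open>x\<close> is a ring homomorphism of \<open>F[x]\<close>; the two agree modulo \<open>x\<^sup>m - 1\<close>.\<close>
definition subst_xinv :: "nat \<Rightarrow> 'a::comm_ring_1 poly \<Rightarrow> 'a poly" where
  "subst_xinv m p = pcompose p (monom 1 (m - 1))"

lemma subst_xinv_hom:
  "subst_xinv m (p + q) = subst_xinv m p + subst_xinv m q"
  "subst_xinv m (p - q) = subst_xinv m p - subst_xinv m q"
  "subst_xinv m (- p) = - subst_xinv m p"
  "subst_xinv m (p * q) = subst_xinv m p * subst_xinv m q"
  "subst_xinv m 1 = 1"
  "subst_xinv m (smult c p) = smult c (subst_xinv m p)"
  "subst_xinv m (sum f A) = (\<Sum>i\<in>A. subst_xinv m (f i))"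
  "subst_xinv m (monom c n) = monom c ((m - 1) * n)"
  by (simp_all add: subst_xinv_def pcompose_add pcompose_diff pcompose_uminus pcompose_mult
      pcompose_smult pcompose_sum pcompose_1 pcompose_monom monom_power smult_monom mult.commute)

lemma subst_xinv_cong:
  assumes "[a = b] (mod xm1 m)"
  shows "[subst_xinv m a = subst_xinv m (b :: 'a::field poly)] (mod xm1 m)"
proof -
  have "[monom 1 ((m - 1) * m) = (1 :: 'a poly)] (mod xm1 m)"
    using cong_monom_monom[of "(m - 1) * m" 0 m 1] by (simp add: cong_0_iff)
  then have "xm1 m dvd subst_xinv m (xm1 m :: 'a poly)"
    by (simp add: xm1_def subst_xinv_hom cong_iff_dvd_diff)
  moreover obtain k where "a - b = xm1 m * k"
    using assms by (auto simp: cong_iff_dvd_diff)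
  ultimately show ?thesis
    by (simp add: cong_iff_dvd_diff subst_xinv_hom(4) flip: subst_xinv_hom(2))
qed

lemma subst_xinv_involution:
  assumes "m > 0"
  shows "[subst_xinv m (subst_xinv m a) = (a :: 'a::field poly)] (mod xm1 m)"
proof -
  have "[monom 1 ((m - 1) * (m - 1)) = (monom 1 1 :: 'a poly)] (mod xm1 m)"
    by (rule cong_monom_monom[OF cong_pred_mult_pred[OF assms]])
  then have "[pcompose a (monom 1 ((m - 1) * (m - 1))) = pcompose a (monom 1 1)] (mod xm1 m)"
    by (rule pcompose_cong)
  moreover have "pcompose a (monom 1 1) = a"
    using pcompose_idR[of a] by (simp add: monom_Suc monom_0 one_pCons)
  moreover have "subst_xinv m (subst_xinv m a) = pcompose a (monom 1 ((m - 1) * (m - 1)))"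
    by (simp add: subst_xinv_def pcompose_monom monom_power flip: pcompose_assoc)
  ultimately show ?thesis
    by simp
qed

lemma bar_cong_subst_xinv:
  assumes "m > 0"
  shows "[bar m b = subst_xinv m (b :: 'a::field poly)] (mod xm1 m)"
proof -
  define b' where "b' = red m b"
  have "bar m b = (\<Sum>i<m. monom (coeff b' i) ((m - i) mod m))"
    by (simp add: bar_def b'_def)
  also have "[\<dots> = (\<Sum>i<m. monom (coeff b' i) ((m - 1) * i))] (mod xm1 m)"
  proof (intro cong_sum cong_monom_monom)
    fix i assume "i \<in> {..<m}"
    then show "[(m - i) mod m = (m - 1) * i] (mod m)"
      using cong_pred_mult[OF assms, of i] by (simp add: cong_sym)
  qed
  also have "(\<Sum>i<m. monom (coeff b' i) ((m - 1) * i)) = subst_xinv m (\<Sum>i<m. monom (coeff b' i) i)"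
    by (simp add: subst_xinv_hom)
  also have "(\<Sum>i<m. monom (coeff b' i) i) = b'"
    unfolding b'_def by (rule sum_monom_coeff_lessThan[OF degree_red_less[OF assms]])
  also have "[subst_xinv m b' = subst_xinv m b] (mod xm1 m)"
    unfolding b'_def by (intro subst_xinv_cong cong_red)
  finally show ?thesis .
qed

lemma cong_subst_xinv_reflect_poly:
  assumes "m > 0"
  shows "[subst_xinv m (reflect_poly f) * monom 1 (degree f) = (f :: 'a::field poly)] (mod xm1 m)"
proof -
  define d where "d = degree f"
  have "reflect_poly f = (\<Sum>i\<le>d. monom (coeff (reflect_poly f) i) i)"
    unfolding d_def by (rule poly_as_sum_of_monoms'[symmetric]) (rule degree_reflect_poly_le)
  also have "\<dots> = (\<Sum>i\<le>d. monom (coeff f (d - i)) i)"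
    by (intro sum.cong refl) (simp add: coeff_reflect_poly d_def)
  finally have "subst_xinv m (reflect_poly f) * monom 1 d
      = (\<Sum>i\<le>d. monom (coeff f (d - i)) ((m - 1) * i + d))"
    by (simp add: subst_xinv_hom sum_distrib_right mult_monom)
  also have "[\<dots> = (\<Sum>i\<le>d. monom (coeff f (d - i)) (d - i))] (mod xm1 m)"
    by (intro cong_sum cong_monom_monom cong_pred_mult_add assms) simp
  also have "(\<Sum>i\<le>d. monom (coeff f (d - i)) (d - i)) = (\<Sum>i\<le>d. monom (coeff f i) i)"
    using sum.nat_diff_reindex[of "\<lambda>i. monom (coeff f i) i" "Suc d"]
    by (simp add: lessThan_Suc_atMost)
  also have "\<dots> = f"
    unfolding d_def by (rule poly_as_sum_of_monoms)
  finally show ?thesis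
    by (simp add: d_def)
qed

lemma sum_coeff_red_eq_coeff_red_subst_xinv:
  assumes "m > 0"
  shows "(\<Sum>i<m. coeff (red m a) i * coeff (red m b) i)
    = coeff (red m (a * subst_xinv m (b :: 'a::field poly))) 0"
proof -
  define a' b' where "a' = red m a" and "b' = red m b"
  have "red m (a * subst_xinv m b) = red m (a' * subst_xinv m b')"
    unfolding a'_def b'_def red_eq_iff_cong
    by (intro cong_mult subst_xinv_cong cong_sym[OF cong_red])
  also have "a' * subst_xinv m b'
      = (\<Sum>j<m. monom (coeff a' j) j) * subst_xinv m (\<Sum>i<m. monom (coeff b' i) i)"
    unfolding a'_def b'_def by (simp only: sum_monom_coeff_lessThan[OF degree_red_less[OF assms]])
  also have "\<dots> = (\<Sum>j<m. \<Sum>i<m. monom (coeff a' j * coeff b' i) (j + (m - 1) * i))"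
    by (simp add: subst_xinv_hom sum_product mult_monom)
  finally have "coeff (red m (a * subst_xinv m b)) 0
      = (\<Sum>j<m. \<Sum>i<m. if [j + (m - 1) * i = 0] (mod m) then coeff a' j * coeff b' i else 0)"
    by (simp add: red_sum red_monom[OF assms] coeff_sum cong_def)
  also have "\<dots> = (\<Sum>j<m. \<Sum>i<m. if i = j then coeff a' j * coeff b' i else 0)"
    by (intro sum.cong refl) (simp add: cong_pred_mult_eq_0_iff[simplified])
  finally show ?thesis
    by (simp add: a'_def b'_def)
qed

lemma cong_0_if_coeff_red_mult_eq_0:
  assumes "m > 0" and orth: "\<And>r. coeff (red m (r * w)) 0 = 0"
  shows "[w = (0 :: 'a::field poly)] (mod xm1 m)"
proof -
  have "coeff (red m w) k = 0" for k
  proof (cases "k < m")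
    case True
    have "coeff (red m w) k = (\<Sum>i<m. if k = i then coeff (red m w) i else 0)"
      using True by simp
    also have "\<dots> = (\<Sum>i<m. coeff (red m w) i * coeff (red m (monom 1 k)) i)"
      using True by (intro sum.cong) (auto simp: red_monom[OF assms(1)])
    also have "\<dots> = coeff (red m (subst_xinv m (monom 1 k) * w)) 0"
      by (simp add: sum_coeff_red_eq_coeff_red_subst_xinv[OF assms(1)] mult.commute)
    finally show ?thesis
      by (simp add: orth)
  next
    case False
    then show ?thesis
      using degree_red_less[OF assms(1), of w] by (simp add: coeff_eq_0)
  qed
  then show ?thesis
    by (simp add: poly_eqI flip: red_eq_0_iff_cong)
qed

section \<open>Words and quasi-cyclic codes\<close>

definition qc_word :: "nat \<Rightarrow> 'a::field poly \<Rightarrow> 'a poly \<Rightarrow> 'a list" where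
  "qc_word m a b = coeff_vec m (red m a) @ coeff_vec m (red m b)"

lemma length_coeff_vec [simp]: "length (coeff_vec m p) = m"
  by (simp add: coeff_vec_def)

lemma length_qc_word [simp]: "length (qc_word m a b) = 2 * m"
  by (simp add: qc_word_def)

lemma qc_code_eq:
  "qc_code m u11 u12 u21 u22 = {qc_word m (r1 * u11 + r2 * u21) (r1 * u12 + r2 * u22) | r1 r2. True}"
  by (simp add: qc_code_def qc_word_def)

lemma length_mem_qc_code: "x \<in> qc_code m u11 u12 u21 u22 \<Longrightarrow> length x = 2 * m"
  by (auto simp: qc_code_eq)

lemma length_mem_dual: "x \<in> dual m B C \<Longrightarrow> length x = 2 * m"
  by (simp add: dual_def)

lemma coeff_vec_red_eq_iff:
  assumes "m > 0"
  shows "coeff_vec m (red m a) = coeff_vec m (red m b) \<longleftrightarrow> [a = b] (mod xm1 m)"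
proof -
  have "coeff_vec m (red m a) = coeff_vec m (red m b) \<longleftrightarrow> (\<forall>i<m. coeff (red m a) i = coeff (red m b) i)"
    by (auto simp: coeff_vec_def)
  also have "\<dots> \<longleftrightarrow> red m a = red m b"
    using degree_red_less[OF assms, of a] degree_red_less[OF assms, of b]
    by (auto intro!: poly_eqI) (metis coeff_eq_0 leI less_le_trans)
  finally show ?thesis
    by (simp add: red_eq_iff_cong)
qed

lemma qc_word_eq_iff:
  "m > 0 \<Longrightarrow> qc_word m a1 a2 = qc_word m b1 b2 \<longleftrightarrow> [a1 = b1] (mod xm1 m) \<and> [a2 = b2] (mod xm1 m)"
  by (simp add: qc_word_def coeff_vec_red_eq_iff)

lemma qc_word_cong:
  "[a1 = b1] (mod xm1 m) \<Longrightarrow> [a2 = b2] (mod xm1 m) \<Longrightarrow> qc_word m a1 a2 = qc_word m b1 b2"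
  by (simp add: qc_word_def flip: red_eq_iff_cong)

lemma coeff_vec_red_Poly: "length xs = m \<Longrightarrow> coeff_vec m (red m (Poly xs)) = (xs :: 'a::field list)"
proof (cases "m = 0")
  case False
  assume len: "length xs = m"
  have "degree (Poly xs) \<le> m - 1"
    using len False by (intro degree_le) (auto simp: nth_default_def)
  then have "red m (Poly xs) = Poly xs"
    using False by (intro red_eq_self) linarith
  then show ?thesis
    using len map_nth_default[of 0 xs] by (simp add: coeff_vec_def)
qed (simp add: coeff_vec_def)

lemma qc_word_surj:
  assumes "length v = 2 * m"
  obtains b1 b2 where "v = qc_word m b1 b2"
proof
  show "v = qc_word m (Poly (take m v)) (Poly (drop m v))"
    using assms by (simp add: qc_word_def coeff_vec_red_Poly)
qed

lemma set_eqI_qc_word: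
  assumes "\<And>b1 b2. qc_word m b1 b2 \<in> A \<longleftrightarrow> qc_word m b1 b2 \<in> B"
    and "\<And>x. x \<in> A \<Longrightarrow> length x = 2 * m" "\<And>x. x \<in> B \<Longrightarrow> length x = 2 * m"
  shows "A = (B :: 'a::field list set)"
proof (rule Set.set_eqI)
  fix x
  show "x \<in> A \<longleftrightarrow> x \<in> B"
  proof (cases "length x = 2 * m")
    case True
    then obtain b1 b2 where "x = qc_word m b1 b2"
      by (rule qc_word_surj)
    then show ?thesis
      using assms(1) by simp
  qed (use assms(2,3) in blast)
qed

lemma qc_word_mem_qc_code_iff:
  "m > 0 \<Longrightarrow> qc_word m b1 b2 \<in> qc_code m u11 u12 u21 u22 \<longleftrightarrow>
    (\<exists>r1 r2. [b1 = r1 * u11 + r2 * u21] (mod xm1 m) \<and> [b2 = r1 * u12 + r2 * u22] (mod xm1 m))"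
  by (auto simp: qc_code_eq qc_word_eq_iff)

lemma qc_code_cong:
  assumes "[u11 = u11'] (mod xm1 m)" "[u12 = u12'] (mod xm1 m)"
    and "[u21 = u21'] (mod xm1 m)" "[u22 = u22'] (mod xm1 m)"
  shows "qc_code m u11 u12 u21 u22 = qc_code m u11' u12' u21' u22'"
proof -
  have "qc_word m (r1 * u11 + r2 * u21) (r1 * u12 + r2 * u22)
      = qc_word m (r1 * u11' + r2 * u21') (r1 * u12' + r2 * u22')" for r1 r2
    by (intro qc_word_cong cong_add cong_mult cong_refl assms)
  then show ?thesis
    by (simp add: qc_code_eq)
qed

lemma qc_word_mem_qc_code_subst_xinv_iff:
  assumes m: "m > 0"
  shows "qc_word m (subst_xinv m b1) (subst_xinv m b2)
      \<in> qc_code m (subst_xinv m u11) (subst_xinv m u12) (subst_xinv m u21) (subst_xinv m u22)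
    \<longleftrightarrow> qc_word m b1 b2 \<in> qc_code m u11 u12 u21 (u22 :: 'a::field poly)"
proof -
  let ?\<sigma> = "subst_xinv m"
  have conj: "qc_word m (?\<sigma> b1) (?\<sigma> b2) \<in> qc_code m (?\<sigma> u11) (?\<sigma> u12) (?\<sigma> u21) (?\<sigma> u22)"
    if mem: "qc_word m b1 b2 \<in> qc_code m u11 u12 u21 u22" for b1 b2 u11 u12 u21 u22 :: "'a poly"
  proof -
    obtain r1 r2 where "[b1 = r1 * u11 + r2 * u21] (mod xm1 m)" "[b2 = r1 * u12 + r2 * u22] (mod xm1 m)"
      using mem by (auto simp: qc_word_mem_qc_code_iff[OF m])
    then have "[?\<sigma> b1 = ?\<sigma> (r1 * u11 + r2 * u21)] (mod xm1 m)"
      "[?\<sigma> b2 = ?\<sigma> (r1 * u12 + r2 * u22)] (mod xm1 m)"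
      by (simp_all add: subst_xinv_cong)
    then have "[?\<sigma> b1 = ?\<sigma> r1 * ?\<sigma> u11 + ?\<sigma> r2 * ?\<sigma> u21] (mod xm1 m)"
      "[?\<sigma> b2 = ?\<sigma> r1 * ?\<sigma> u12 + ?\<sigma> r2 * ?\<sigma> u22] (mod xm1 m)"
      by (simp_all add: subst_xinv_hom)
    then show ?thesis
      by (auto simp: qc_word_mem_qc_code_iff[OF m])
  qed
  have word: "qc_word m (?\<sigma> (?\<sigma> b1)) (?\<sigma> (?\<sigma> b2)) = qc_word m b1 b2"
    by (intro qc_word_cong subst_xinv_involution m)
  have code: "qc_code m (?\<sigma> (?\<sigma> u11)) (?\<sigma> (?\<sigma> u12)) (?\<sigma> (?\<sigma> u21)) (?\<sigma> (?\<sigma> u22))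
      = qc_code m u11 u12 u21 u22"
    by (intro qc_code_cong subst_xinv_involution m)
  show ?thesis
  proof
    assume "qc_word m (?\<sigma> b1) (?\<sigma> b2) \<in> qc_code m (?\<sigma> u11) (?\<sigma> u12) (?\<sigma> u21) (?\<sigma> u22)"
    from conj[OF this] show "qc_word m b1 b2 \<in> qc_code m u11 u12 u21 u22"
      by (simp only: word code)
  qed (rule conj)
qed

lemma cong_uminus_left_iff: "[- a = b] (mod n) \<longleftrightarrow> [a = - b] (mod (n :: 'a::unique_euclidean_ring))"
  using cong_minus_minus_iff[of a "- b" n] by simp

lemma qc_word_rotate_mem_qc_code_iff:
  assumes m: "m > 0"
  shows "qc_word m b2 (- b1) \<in> qc_code m u11 u12 u21 u22 \<longleftrightarrow>
    qc_word m b1 b2 \<in> qc_code m u22 (- u21) (- u12) (u11 :: 'a::field poly)"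
proof -
  have "qc_word m b2 (- b1) \<in> qc_code m u11 u12 u21 u22 \<longleftrightarrow>
      (\<exists>r1 r2. [b1 = - (r1 * u12 + r2 * u22)] (mod xm1 m) \<and> [b2 = r1 * u11 + r2 * u21] (mod xm1 m))"
    by (auto simp: qc_word_mem_qc_code_iff[OF m] cong_uminus_left_iff)
  also have "\<dots> \<longleftrightarrow>
      (\<exists>s1 s2. [b1 = s1 * u22 + s2 * (- u12)] (mod xm1 m) \<and> [b2 = s1 * (- u21) + s2 * u11] (mod xm1 m))"
  proof
    assume "\<exists>r1 r2. [b1 = - (r1 * u12 + r2 * u22)] (mod xm1 m) \<and> [b2 = r1 * u11 + r2 * u21] (mod xm1 m)"
    then obtain r1 r2 where "[b1 = - (r1 * u12 + r2 * u22)] (mod xm1 m)" "[b2 = r1 * u11 + r2 * u21] (mod xm1 m)"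
      by blast
    then show "\<exists>s1 s2. [b1 = s1 * u22 + s2 * (- u12)] (mod xm1 m) \<and> [b2 = s1 * (- u21) + s2 * u11] (mod xm1 m)"
      by (intro exI[of _ "- r2"] exI[of _ r1]) (simp add: algebra_simps)
  next
    assume "\<exists>s1 s2. [b1 = s1 * u22 + s2 * (- u12)] (mod xm1 m) \<and> [b2 = s1 * (- u21) + s2 * u11] (mod xm1 m)"
    then obtain s1 s2 where "[b1 = s1 * u22 + s2 * (- u12)] (mod xm1 m)" "[b2 = s1 * (- u21) + s2 * u11] (mod xm1 m)"
      by blast
    then show "\<exists>r1 r2. [b1 = - (r1 * u12 + r2 * u22)] (mod xm1 m) \<and> [b2 = r1 * u11 + r2 * u21] (mod xm1 m)"
      by (intro exI[of _ s2] exI[of _ "- s1"]) (simp add: algebra_simps)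
  qed
  also have "\<dots> \<longleftrightarrow> qc_word m b1 b2 \<in> qc_code m u22 (- u21) (- u12) u11"
    by (simp add: qc_word_mem_qc_code_iff[OF m])
  finally show ?thesis .
qed

lemma sum_lessThan_double:
  fixes m :: nat
  shows "(\<Sum>i<2 * m. f i) = (\<Sum>i<m. f i) + (\<Sum>i<m. f (m + i) :: 'a::comm_monoid_add)"
proof -
  have "(\<Sum>i<2 * m. f i) = sum f {0..<m} + sum f {m..<m + m}"
    by (simp add: sum.atLeastLessThan_concat lessThan_atLeast0 mult_2)
  also have "sum f {m..<m + m} = (\<Sum>i<m. f (m + i))"
    using sum.shift_bounds_nat_ivl[of f 0 m m] by (simp add: lessThan_atLeast0 add.commute)
  finally show ?thesis
    by (simp add: lessThan_atLeast0)
qed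

lemma euclid_ip_qc_word:
  assumes "m > 0"
  shows "euclid_ip m (qc_word m a1 a2) (qc_word m b1 b2)
    = coeff (red m (a1 * subst_xinv m b1 + a2 * subst_xinv m b2)) 0"
  by (simp add: euclid_ip_def qc_word_def sum_lessThan_double nth_append coeff_vec_def red_add
      sum_coeff_red_eq_coeff_red_subst_xinv[OF assms])

lemma symp_ip_qc_word:
  "symp_ip m (qc_word m a1 a2) (qc_word m b1 b2) = euclid_ip m (qc_word m a1 a2) (qc_word m b2 (- b1))"
  by (simp add: symp_ip_def euclid_ip_def qc_word_def sum_lessThan_double nth_append coeff_vec_def
      red_uminus sum_subtractf sum_negf)

lemma herm_ip_eq_euclid_ip:
  "length u = 2 * m \<Longrightarrow> herm_ip q m u v = euclid_ip m (map (\<lambda>c. c ^ q) u) v"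
  by (simp add: herm_ip_def euclid_ip_def)

section \<open>The Euclidean and symplectic duals\<close>

lemma perp_eq_reflect_cofactor:
  assumes "lead_coeff g = 1" "g dvd xm1 m"
  shows "perp m g = smult (inverse (coeff (xm1 m div g) 0)) (reflect_poly (xm1 m div (g :: 'a::field_gcd poly)))"
proof -
  have "gcd g (xm1 m) = g"
    using assms by (simp add: gcd_proj1_if_dvd normalize_poly_def one_pCons[symmetric])
  then show ?thesis
    by (simp add: perp_def Let_def)
qed

lemma coeff_0_xm1_div_neq_0:
  assumes "m > 0" "g dvd xm1 m"
  shows "coeff (xm1 m div g) 0 \<noteq> (0 :: 'a::field)"
proof -
  have "coeff g 0 * coeff (xm1 m div g) 0 = coeff (xm1 m) 0"
    using assms(2) by (simp flip: coeff_mult_0)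
  also have "\<dots> = -1"
    using assms(1) by (simp add: xm1_def)
  finally show ?thesis
    by auto
qed

text \<open>Modulo \<open>x\<^sup>m - 1\<close>, the conjugate of \<open>perp m g\<close> is an associate of the cofactor \<open>(x\<^sup>m - 1)/g\<close>.\<close>
lemma cong_mult_eq_0_iff_perp:
  assumes m: "m > 0" and g: "lead_coeff g = 1" "g dvd xm1 m"
  shows "[g * c = 0] (mod xm1 m) \<longleftrightarrow>
    (\<exists>t. [c = subst_xinv m (perp m g) * t] (mod xm1 m))"
proof -
  define f where "f = xm1 m div (g :: 'a::field_gcd poly)"
  define d where "d = degree f"
  define P where "P = subst_xinv m (perp m g)"
  have f0: "coeff f 0 \<noteq> 0"
    unfolding f_def by (rule coeff_0_xm1_div_neq_0[OF m g(2)])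
  have gf: "g * f = xm1 m"
    using g(2) by (simp add: f_def)
  have "P * smult (coeff f 0) (monom 1 d) = subst_xinv m (reflect_poly f) * monom 1 d"
    using f0 by (simp add: P_def perp_eq_reflect_cofactor[OF g] subst_xinv_hom f_def)
  also have "[\<dots> = f] (mod xm1 m)"
    unfolding d_def by (rule cong_subst_xinv_reflect_poly[OF m])
  finally have P_f: "[P * smult (coeff f 0) (monom 1 d) = f] (mod xm1 m)" .
  define u' where "u' = smult (inverse (coeff f 0)) (monom 1 ((m - 1) * d))"
  have unit: "[monom 1 (d + (m - 1) * d) = (1 :: 'a poly)] (mod xm1 m)"
    using cong_monom_monom[OF cong_pred_mult_add_self[OF m, of d], of 1]
    by (simp add: add.commute one_pCons monom_0)
  have "[f * u' = P * smult (coeff f 0) (monom 1 d) * u'] (mod xm1 m)"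
    by (rule cong_mult[OF cong_sym[OF P_f] cong_refl])
  also have "P * smult (coeff f 0) (monom 1 d) * u' = P * monom 1 (d + (m - 1) * d)"
    using f0 by (simp add: u'_def mult_monom mult.assoc)
  also have "[\<dots> = P * 1] (mod xm1 m)"
    by (rule cong_mult[OF cong_refl unit])
  finally have f_P: "[f * u' = P] (mod xm1 m)"
    by simp
  show ?thesis
  proof
    assume "[g * c = 0] (mod xm1 m)"
    then have "g * f dvd g * c"
      by (simp add: gf cong_0_iff)
    then obtain k where "c = f * k"
      using g(1) by (auto simp: dvd_def)
    then have "[c = P * smult (coeff f 0) (monom 1 d) * k] (mod xm1 m)"
      using cong_mult[OF cong_sym[OF P_f] cong_refl[of k]] by simp
    then have "[c = P * (smult (coeff f 0) (monom 1 d) * k)] (mod xm1 m)"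
      by (simp only: mult.assoc)
    then show "\<exists>t. [c = subst_xinv m (perp m g) * t] (mod xm1 m)"
      unfolding P_def by blast
  next
    assume "\<exists>t. [c = subst_xinv m (perp m g) * t] (mod xm1 m)"
    then obtain t where "[c = P * t] (mod xm1 m)"
      unfolding P_def by blast
    then have "[c = f * u' * t] (mod xm1 m)"
      using cong_mult[OF f_P cong_refl[of t]] by (rule cong_trans[OF _ cong_sym])
    then have "[g * c = g * (f * u' * t)] (mod xm1 m)"
      by (rule cong_mult[OF cong_refl])
    also have "g * (f * u' * t) = xm1 m * (u' * t)"
      by (simp add: gf[symmetric] mult_ac)
    also have "[\<dots> = 0] (mod xm1 m)"
      by (simp add: cong_0_iff)
    finally show "[g * c = 0] (mod xm1 m)" .
  qed
qed

lemma qc_word_mem_dual_euclid_iff: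
  assumes m: "m > 0"
  shows "qc_word m b1 b2 \<in> dual m (euclid_ip m) (qc_code m u11 u12 u21 u22) \<longleftrightarrow>
    [u11 * subst_xinv m b1 + u12 * subst_xinv m b2 = 0] (mod xm1 m) \<and>
    [u21 * subst_xinv m b1 + u22 * subst_xinv m b2 = (0 :: 'a::field poly)] (mod xm1 m)"
    (is "_ \<longleftrightarrow> [?c1 = 0] (mod _) \<and> [?c2 = 0] (mod _)")
proof -
  have ip: "euclid_ip m (qc_word m (r1 * u11 + r2 * u21) (r1 * u12 + r2 * u22)) (qc_word m b1 b2)
      = coeff (red m (r1 * ?c1 + r2 * ?c2)) 0" for r1 r2
    by (simp add: euclid_ip_qc_word[OF m] algebra_simps)
  have "qc_word m b1 b2 \<in> dual m (euclid_ip m) (qc_code m u11 u12 u21 u22) \<longleftrightarrow>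
      (\<forall>r1 r2. euclid_ip m (qc_word m (r1 * u11 + r2 * u21) (r1 * u12 + r2 * u22)) (qc_word m b1 b2) = 0)"
    by (auto simp: dual_def qc_code_eq)
  also have "\<dots> \<longleftrightarrow> (\<forall>r1 r2. coeff (red m (r1 * ?c1 + r2 * ?c2)) 0 = 0)"
    by (simp only: ip)
  also have "\<dots> \<longleftrightarrow> [?c1 = 0] (mod xm1 m) \<and> [?c2 = 0] (mod xm1 m)"
  proof safe
    assume orth: "\<forall>r1 r2. coeff (red m (r1 * ?c1 + r2 * ?c2)) 0 = 0"
    show "[?c1 = 0] (mod xm1 m)" "[?c2 = 0] (mod xm1 m)"
      using orth[rule_format, of _ 0] orth[rule_format, of 0]
      by (auto intro: cong_0_if_coeff_red_mult_eq_0[OF m])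
  next
    fix r1 r2
    assume "[?c1 = 0] (mod xm1 m)" "[?c2 = 0] (mod xm1 m)"
    then have "[r1 * ?c1 + r2 * ?c2 = r1 * 0 + r2 * 0] (mod xm1 m)"
      by (intro cong_add cong_mult cong_refl)
    then have "red m (r1 * ?c1 + r2 * ?c2) = 0"
      by (simp add: red_eq_0_iff_cong)
    then show "coeff (red m (r1 * ?c1 + r2 * ?c2)) 0 = 0"
      by simp
  qed
  finally show ?thesis .
qed

lemma cong_inverse_if_gcd_eq_1:
  assumes "gcd a n = 1"
  shows "\<exists>x. [x * a = 1] (mod (n :: 'a::{euclidean_ring_gcd, unique_euclidean_ring}))"
proof -
  obtain x y where xy: "x * a + y * n = 1"
    using bezout_coefficients_fst_snd[of a n] assms by metis
  have "x * a - 1 = x * a - (x * a + y * n)"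
    by (simp add: xy)
  also have "\<dots> = n * (- y)"
    by (simp add: algebra_simps)
  finally have "[x * a = 1] (mod n)"
    by (simp add: cong_iff_dvd_diff)
  then show ?thesis ..
qed

lemma cong_recover_2x2:
  "[w * (1 - v1 * v2) = 1] (mod n) \<Longrightarrow>
    [x = w * ((x + v1 * y) - v1 * (v2 * x + y))] (mod (n :: 'a::unique_euclidean_ring))"
proof -
  assume "[w * (1 - v1 * v2) = 1] (mod n)"
  then have "[1 * x = w * (1 - v1 * v2) * x] (mod n)"
    by (rule cong_mult[OF cong_sym cong_refl])
  then show ?thesis
    by (simp add: algebra_simps)
qed

lemma cong_solve_2x2:
  assumes w: "[w * (1 - v1 * v2) = 1] (mod n)"
  shows "(\<exists>t1 t2. [B1 + v1 * B2 = H1 * t1] (mod n) \<and> [v2 * B1 + B2 = H2 * t2] (mod n)) \<longleftrightarrow>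
    (\<exists>s1 s2. [B1 = s1 * H1 + s2 * (- v1 * H2)] (mod n) \<and>
             [B2 = s1 * (- v2 * H1) + s2 * H2] (mod (n :: 'a::unique_euclidean_ring)))"
proof safe
  fix t1 t2
  assume t1: "[B1 + v1 * B2 = H1 * t1] (mod n)" and t2: "[v2 * B1 + B2 = H2 * t2] (mod n)"
  have "[B1 = w * ((B1 + v1 * B2) - v1 * (v2 * B1 + B2))] (mod n)"
    by (rule cong_recover_2x2[OF w])
  also have "[w * ((B1 + v1 * B2) - v1 * (v2 * B1 + B2)) = w * (H1 * t1 - v1 * (H2 * t2))] (mod n)"
    by (intro cong_mult cong_diff cong_refl t1 t2)
  also have "w * (H1 * t1 - v1 * (H2 * t2)) = (w * t1) * H1 + (w * t2) * (- v1 * H2)"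
    by (simp add: algebra_simps)
  finally have B1: "[B1 = (w * t1) * H1 + (w * t2) * (- v1 * H2)] (mod n)" .
  have "[B2 = w * ((B2 + v2 * B1) - v2 * (v1 * B2 + B1))] (mod n)"
    using w by (intro cong_recover_2x2) (simp add: mult.commute)
  also have "[w * ((B2 + v2 * B1) - v2 * (v1 * B2 + B1)) = w * (H2 * t2 - v2 * (H1 * t1))] (mod n)"
    using t1 t2 by (intro cong_mult cong_diff cong_refl) (simp_all add: add.commute)
  also have "w * (H2 * t2 - v2 * (H1 * t1)) = (w * t1) * (- v2 * H1) + (w * t2) * H2"
    by (simp add: algebra_simps)
  finally have B2: "[B2 = (w * t1) * (- v2 * H1) + (w * t2) * H2] (mod n)" .
  from B1 B2 show "\<exists>s1 s2. [B1 = s1 * H1 + s2 * (- v1 * H2)] (mod n) \<and>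
      [B2 = s1 * (- v2 * H1) + s2 * H2] (mod n)"
    by blast
next
  fix s1 s2
  assume B1: "[B1 = s1 * H1 + s2 * (- v1 * H2)] (mod n)"
    and B2: "[B2 = s1 * (- v2 * H1) + s2 * H2] (mod n)"
  have "[B1 + v1 * B2 = (s1 * H1 + s2 * (- v1 * H2)) + v1 * (s1 * (- v2 * H1) + s2 * H2)] (mod n)"
    by (intro cong_add cong_mult cong_refl B1 B2)
  also have "(s1 * H1 + s2 * (- v1 * H2)) + v1 * (s1 * (- v2 * H1) + s2 * H2) = H1 * (s1 * (1 - v1 * v2))"
    by (simp add: algebra_simps)
  finally have t1: "[B1 + v1 * B2 = H1 * (s1 * (1 - v1 * v2))] (mod n)" .
  have "[v2 * B1 + B2 = v2 * (s1 * H1 + s2 * (- v1 * H2)) + (s1 * (- v2 * H1) + s2 * H2)] (mod n)"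
    by (intro cong_add cong_mult cong_refl B1 B2)
  also have "v2 * (s1 * H1 + s2 * (- v1 * H2)) + (s1 * (- v2 * H1) + s2 * H2) = H2 * (s2 * (1 - v1 * v2))"
    by (simp add: algebra_simps)
  finally have t2: "[v2 * B1 + B2 = H2 * (s2 * (1 - v1 * v2))] (mod n)" .
  from t1 t2 show "\<exists>t1 t2. [B1 + v1 * B2 = H1 * t1] (mod n) \<and> [v2 * B1 + B2 = H2 * t2] (mod n)"
    by blast
qed

lemma dual_euclid_qc_code:
  fixes g1 g2 v1 v2 w :: "'a::field_gcd poly"
  assumes m: "m > 0"
    and g1: "lead_coeff g1 = 1" "g1 dvd xm1 m"
    and g2: "lead_coeff g2 = 1" "g2 dvd xm1 m"
    and w: "[w * (1 - v1 * v2) = 1] (mod xm1 m)"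
  shows "dual m (euclid_ip m) (qc_code m g1 (v1 * g1) (v2 * g2) g2)
    = qc_code m (perp m g1) (- bar m v2 * perp m g1) (- bar m v1 * perp m g2) (perp m g2)"
proof -
  let ?\<sigma> = "subst_xinv m"
  define h1 h2 where "h1 = perp m g1" and "h2 = perp m g2"
  have code_bar: "qc_code m h1 (- bar m v2 * h1) (- bar m v1 * h2) h2
      = qc_code m h1 (- ?\<sigma> v2 * h1) (- ?\<sigma> v1 * h2) h2"
    by (intro qc_code_cong cong_refl cong_mult)
      (simp_all add: cong_minus_minus_iff bar_cong_subst_xinv[OF m])
  have code_conj: "qc_code m (?\<sigma> h1) (?\<sigma> (- ?\<sigma> v2 * h1)) (?\<sigma> (- ?\<sigma> v1 * h2)) (?\<sigma> h2)
      = qc_code m (?\<sigma> h1) (- v2 * ?\<sigma> h1) (- v1 * ?\<sigma> h2) (?\<sigma> h2)"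
    by (intro qc_code_cong cong_refl)
      (simp_all add: subst_xinv_hom cong_minus_minus_iff cong_mult subst_xinv_involution[OF m])
  have "qc_word m b1 b2 \<in> dual m (euclid_ip m) (qc_code m g1 (v1 * g1) (v2 * g2) g2)
      \<longleftrightarrow> qc_word m b1 b2 \<in> qc_code m h1 (- ?\<sigma> v2 * h1) (- ?\<sigma> v1 * h2) h2" for b1 b2
  proof -
    let ?B1 = "?\<sigma> b1" and ?B2 = "?\<sigma> b2"
    have "qc_word m b1 b2 \<in> dual m (euclid_ip m) (qc_code m g1 (v1 * g1) (v2 * g2) g2)
        \<longleftrightarrow> [g1 * (?B1 + v1 * ?B2) = 0] (mod xm1 m) \<and> [g2 * (v2 * ?B1 + ?B2) = 0] (mod xm1 m)"
      by (simp add: qc_word_mem_dual_euclid_iff[OF m] algebra_simps)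
    also have "\<dots> \<longleftrightarrow> (\<exists>t1 t2. [?B1 + v1 * ?B2 = ?\<sigma> h1 * t1] (mod xm1 m) \<and>
        [v2 * ?B1 + ?B2 = ?\<sigma> h2 * t2] (mod xm1 m))"
      by (simp add: cong_mult_eq_0_iff_perp[OF m g1] cong_mult_eq_0_iff_perp[OF m g2] h1_def h2_def)
    also have "\<dots> \<longleftrightarrow> (\<exists>s1 s2. [?B1 = s1 * ?\<sigma> h1 + s2 * (- v1 * ?\<sigma> h2)] (mod xm1 m) \<and>
        [?B2 = s1 * (- v2 * ?\<sigma> h1) + s2 * ?\<sigma> h2] (mod xm1 m))"
      by (rule cong_solve_2x2[OF w])
    also have "\<dots> \<longleftrightarrow> qc_word m ?B1 ?B2 \<in> qc_code m (?\<sigma> h1) (- v2 * ?\<sigma> h1) (- v1 * ?\<sigma> h2) (?\<sigma> h2)"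
      by (simp add: qc_word_mem_qc_code_iff[OF m])
    also have "\<dots> \<longleftrightarrow> qc_word m b1 b2 \<in> qc_code m h1 (- ?\<sigma> v2 * h1) (- ?\<sigma> v1 * h2) h2"
      using qc_word_mem_qc_code_subst_xinv_iff[OF m, of b1 b2 h1 "- ?\<sigma> v2 * h1" "- ?\<sigma> v1 * h2" h2]
      by (simp only: code_conj)
    finally show ?thesis .
  qed
  then show ?thesis
    unfolding h1_def[symmetric] h2_def[symmetric] code_bar
    by (intro set_eqI_qc_word length_mem_dual length_mem_qc_code)
qed

lemma qc_word_mem_dual_symp_iff:
  "qc_word m b1 b2 \<in> dual m (symp_ip m) (qc_code m u11 u12 u21 u22) \<longleftrightarrow>
    qc_word m b2 (- b1) \<in> dual m (euclid_ip m) (qc_code m u11 u12 u21 u22)"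
proof -
  have "symp_ip m u (qc_word m b1 b2) = euclid_ip m u (qc_word m b2 (- b1))"
    if "u \<in> qc_code m u11 u12 u21 u22" for u
    using that by (auto simp: qc_code_eq symp_ip_qc_word)
  then show ?thesis
    by (auto simp: dual_def)
qed

lemma dual_symp_qc_code:
  fixes g1 g2 v1 v2 w :: "'a::field_gcd poly"
  assumes m: "m > 0"
    and g1: "lead_coeff g1 = 1" "g1 dvd xm1 m"
    and g2: "lead_coeff g2 = 1" "g2 dvd xm1 m"
    and w: "[w * (1 - v1 * v2) = 1] (mod xm1 m)"
  shows "dual m (symp_ip m) (qc_code m g1 (v1 * g1) (v2 * g2) g2)
    = qc_code m (perp m g2) (bar m v1 * perp m g2) (bar m v2 * perp m g1) (perp m g1)"
proof -
  have "qc_word m b1 b2 \<in> dual m (symp_ip m) (qc_code m g1 (v1 * g1) (v2 * g2) g2)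
      \<longleftrightarrow> qc_word m b1 b2 \<in> qc_code m (perp m g2) (bar m v1 * perp m g2) (bar m v2 * perp m g1) (perp m g1)"
    for b1 b2
    by (simp add: qc_word_mem_dual_symp_iff dual_euclid_qc_code[OF assms]
        qc_word_rotate_mem_qc_code_iff[OF m])
  then show ?thesis
    by (intro set_eqI_qc_word length_mem_dual length_mem_qc_code)
qed

section \<open>The Hermitian dual\<close>

context
  fixes q :: nat
  assumes power_q_add: "\<And>a b :: 'a::field. (a + b) ^ q = a ^ q + b ^ q"
    and power_q_power_q: "\<And>a :: 'a. (a ^ q) ^ q = a"
begin

lemma q_pos: "q > 0"
  using power_q_power_q[of 0] by (cases q) simp_all

lemma zero_power_q [simp]: "(0 :: 'a) ^ q = 0"
  using q_pos by (simp add: zero_power)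

lemma power_q_sum: "(sum f A) ^ q = (\<Sum>i\<in>A. (f i :: 'a) ^ q)"
  by (induction A rule: infinite_finite_induct) (simp_all add: power_q_add)

lemma power_q_uminus: "(- a) ^ q = - ((a :: 'a) ^ q)"
  using power_q_add[of a "- a"] by (simp add: eq_neg_iff_add_eq_0 add.commute)

lemma coeff_frob: "coeff (frob q p) n = (coeff p n :: 'a) ^ q"
  by (simp add: frob_def coeff_map_poly)

lemma frob_0: "frob q 0 = (0 :: 'a poly)"
  by (simp add: frob_def)

lemma frob_add: "frob q (p + p') = frob q p + frob q (p' :: 'a poly)"
  by (rule poly_eqI) (simp add: coeff_frob power_q_add)

lemma frob_uminus: "frob q (- p) = - frob q (p :: 'a poly)"
  by (rule poly_eqI) (simp add: coeff_frob power_q_uminus)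

lemma frob_hom:
  "frob q (p - p') = frob q p - frob q (p' :: 'a poly)"
  "frob q (p * p') = frob q p * frob q p'"
  "frob q (1 :: 'a poly) = 1"
  "frob q (monom (c :: 'a) n) = monom (c ^ q) n"
  "frob q (sum (f :: 'b \<Rightarrow> 'a poly) A) = (\<Sum>i\<in>A. frob q (f i))"
proof -
  show "frob q (p - p') = frob q p - frob q p'"
    by (simp add: diff_conv_add_uminus frob_add frob_uminus del: add_uminus_conv_diff)
  show "frob q (p * p') = frob q p * frob q p'"
    by (rule poly_eqI) (simp add: coeff_frob coeff_mult power_q_sum power_mult_distrib)
  show "frob q 1 = 1"
    by (simp add: frob_def)
  show "frob q (monom c n) = monom (c ^ q) n"
    unfolding frob_def by (rule map_poly_monom) (simp add: q_pos)
  show "frob q (sum f A) = (\<Sum>i\<in>A. frob q (f i))"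
    by (induction A rule: infinite_finite_induct) (simp_all add: frob_add frob_0)
qed

lemma frob_frob [simp]: "frob q (frob q p) = (p :: 'a poly)"
  by (rule poly_eqI) (simp add: coeff_frob power_q_power_q)

lemma degree_frob [simp]: "degree (frob q p) = degree (p :: 'a poly)"
  by (simp add: frob_def degree_map_poly)

lemma lead_coeff_frob: "lead_coeff (frob q p) = (lead_coeff p :: 'a) ^ q"
  by (simp add: coeff_frob)

lemma frob_xm1 [simp]: "frob q (xm1 m) = (xm1 m :: 'a poly)"
  by (simp add: xm1_def frob_hom)

lemma frob_dvd_xm1:
  assumes "g dvd xm1 m"
  shows "frob q g dvd (xm1 m :: 'a poly)"
proof -
  obtain k where "xm1 m = g * k"
    using assms by (rule dvdE)
  then have "frob q (xm1 m) = frob q g * frob q k"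
    by (simp add: frob_hom)
  then show ?thesis
    by simp
qed

lemma red_frob:
  assumes "m > 0"
  shows "red m (frob q p) = frob q (red m (p :: 'a poly))"
proof -
  have "frob q p = frob q (red m p + p div xm1 m * xm1 m)"
    by (simp add: red_def)
  also have "\<dots> = frob q (red m p) + frob q (p div xm1 m) * xm1 m"
    by (simp add: frob_add frob_hom)
  finally have "red m (frob q p) = red m (frob q (red m p))"
    by (simp add: red_def)
  also have "\<dots> = frob q (red m p)"
    by (rule red_eq_self) (simp add: degree_red_less[OF assms])
  finally show ?thesis .
qed

lemma frob_cong:
  "m > 0 \<Longrightarrow> [a = b] (mod xm1 m) \<Longrightarrow> [frob q a = frob q (b :: 'a poly)] (mod xm1 m)"
  by (simp flip: red_eq_iff_cong add: red_frob)

lemma frob_bar: "m > 0 \<Longrightarrow> frob q (bar m v) = bar m (frob q (v :: 'a poly))"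
  by (simp add: bar_def frob_hom red_frob coeff_frob)

lemma map_power_q_qc_word:
  "m > 0 \<Longrightarrow> map (\<lambda>c. c ^ q) (qc_word m a b) = qc_word m (frob q a) (frob q (b :: 'a poly))"
  by (simp add: qc_word_def coeff_vec_def red_frob coeff_frob)

lemma image_map_power_q_qc_code:
  assumes "m > 0"
  shows "map (\<lambda>c. c ^ q) ` qc_code m u11 u12 u21 u22
    = qc_code m (frob q u11) (frob q u12) (frob q u21) (frob q (u22 :: 'a poly))"
proof -
  have eq: "map (\<lambda>c. c ^ q) (qc_word m (r1 * u11 + r2 * u21) (r1 * u12 + r2 * u22))
      = qc_word m (frob q r1 * frob q u11 + frob q r2 * frob q u21)
          (frob q r1 * frob q u12 + frob q r2 * frob q u22)" for r1 r2
    by (simp add: map_power_q_qc_word[OF assms] frob_add frob_hom)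
  show ?thesis
  proof (intro equalityI subsetI)
    fix x
    assume "x \<in> map (\<lambda>c. c ^ q) ` qc_code m u11 u12 u21 u22"
    then obtain r1 r2 where
      "x = map (\<lambda>c. c ^ q) (qc_word m (r1 * u11 + r2 * u21) (r1 * u12 + r2 * u22))"
      by (auto simp: qc_code_eq)
    then show "x \<in> qc_code m (frob q u11) (frob q u12) (frob q u21) (frob q u22)"
      unfolding eq qc_code_eq by blast
  next
    fix x
    assume "x \<in> qc_code m (frob q u11) (frob q u12) (frob q u21) (frob q u22)"
    then obtain s1 s2 where
      "x = qc_word m (s1 * frob q u11 + s2 * frob q u21) (s1 * frob q u12 + s2 * frob q u22)"
      by (auto simp: qc_code_eq)
    then have "x = map (\<lambda>c. c ^ q)
        (qc_word m (frob q s1 * u11 + frob q s2 * u21) (frob q s1 * u12 + frob q s2 * u22))"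
      by (simp add: eq)
    then show "x \<in> map (\<lambda>c. c ^ q) ` qc_code m u11 u12 u21 u22"
      by (auto simp: qc_code_eq)
  qed
qed

end

lemma dual_herm_eq_dual_euclid_image:
  assumes "\<And>u. u \<in> C \<Longrightarrow> length u = 2 * m"
  shows "dual m (herm_ip q m) C = dual m (euclid_ip m) (map (\<lambda>c. c ^ q) ` C)"
  by (auto simp: dual_def herm_ip_eq_euclid_ip assms)

lemma dual_herm_qc_code:
  fixes g1 g2 v1 v2 w :: "'a::field_gcd poly"
  assumes power_q_add: "\<And>a b :: 'a. (a + b) ^ q = a ^ q + b ^ q"
    and power_q_power_q: "\<And>a :: 'a. (a ^ q) ^ q = a"
    and m: "m > 0"
    and g1: "lead_coeff g1 = 1" "g1 dvd xm1 m"
    and g2: "lead_coeff g2 = 1" "g2 dvd xm1 m"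
    and w: "[w * (1 - v1 * v2) = 1] (mod xm1 m)"
  shows "dual m (herm_ip q m) (qc_code m g1 (v1 * g1) (v2 * g2) g2)
    = qc_code m (perpH q m g1) (- frob q (bar m v2) * perpH q m g1)
        (- frob q (bar m v1) * perpH q m g2) (perpH q m g2)"
proof -
  note frob = power_q_add power_q_power_q
  have fg1: "lead_coeff (frob q g1) = 1" "frob q g1 dvd xm1 m"
    using g1 by (simp_all add: lead_coeff_frob[OF frob] frob_dvd_xm1[OF frob])
  have fg2: "lead_coeff (frob q g2) = 1" "frob q g2 dvd xm1 m"
    using g2 by (simp_all add: lead_coeff_frob[OF frob] frob_dvd_xm1[OF frob])
  have fw: "[frob q w * (1 - frob q v1 * frob q v2) = 1] (mod xm1 m)"
    using frob_cong[OF frob m w] by (simp add: frob_hom[OF frob])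
  have "dual m (herm_ip q m) (qc_code m g1 (v1 * g1) (v2 * g2) g2)
      = dual m (euclid_ip m) (map (\<lambda>c. c ^ q) ` qc_code m g1 (v1 * g1) (v2 * g2) g2)"
    by (rule dual_herm_eq_dual_euclid_image) (rule length_mem_qc_code)
  also have "map (\<lambda>c. c ^ q) ` qc_code m g1 (v1 * g1) (v2 * g2) g2
      = qc_code m (frob q g1) (frob q v1 * frob q g1) (frob q v2 * frob q g2) (frob q g2)"
    by (simp add: image_map_power_q_qc_code[OF frob m] frob_hom[OF frob])
  also have "dual m (euclid_ip m) \<dots> = qc_code m (perp m (frob q g1)) (- bar m (frob q v2) * perp m (frob q g1))
      (- bar m (frob q v1) * perp m (frob q g2)) (perp m (frob q g2))"
    by (rule dual_euclid_qc_code[OF m fg1 fg2 fw])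
  finally show ?thesis
    by (simp add: perpH_def frob_bar[OF frob m])
qed

text \<open>The library version \<open>finite_field_power_card_eq_same\<close> needs the sort \<^class>\<open>finite_field\<close>.\<close>
lemma power_card_eq_self: "(x :: 'a::{field,finite}) ^ CARD('a) = x"
proof (cases "x = 0")
  case False
  have "x ^ card (UNIV - {0 :: 'a}) * (\<Prod>y\<in>UNIV - {0}. y) = (\<Prod>y\<in>UNIV - {0}. x * y)"
    by (simp add: prod.distrib)
  also have "\<dots> = (\<Prod>y\<in>UNIV - {0}. y)"
    by (rule prod.reindex_bij_witness[of _ "\<lambda>y. y / x" "\<lambda>y. x * y"]) (use False in auto)
  finally have "x ^ (CARD('a) - 1) = 1"
    by (simp add: card_Diff_singleton)
  moreover have "CARD('a) = Suc (CARD('a) - 1)"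
    using finite_UNIV_card_ge_0[where 'a = 'a] by simp
  ultimately show ?thesis
    by (metis power_Suc mult_1_right)
qed simp

lemma prime_dvd_card_imp_eq_CHAR:
  assumes r: "prime r" and dvd: "r dvd CARD('a::{field,finite})"
  shows "r = CHAR('a)"
proof -
  define G where "G = \<lparr>carrier = (UNIV :: 'a set), monoid.mult = (+), one = (0 :: 'a)\<rparr>"
  have "group G"
  proof (rule groupI)
    fix x assume "x \<in> carrier G"
    show "\<exists>y\<in>carrier G. y \<otimes>\<^bsub>G\<^esub> x = \<one>\<^bsub>G\<^esub>"
      by (intro bexI[of _ "- x"]) (auto simp: G_def)
  qed (auto simp: G_def add_ac)
  moreover have "order G = r ^ 1 * (CARD('a) div r)"
    using dvd by (simp add: order_def G_def)
  ultimately obtain H where H: "subgroup H G" "card H = r"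
    using sylow_thm[OF r] by (fastforce simp: G_def)
  txt \<open>Translation by an element \<open>x\<close> of a Sylow \<open>r\<close>-subgroup \<open>H\<close> of \<open>(F, +)\<close> permutes \<open>H\<close>;
    summing over \<open>H\<close> gives \<open>r \<cdot> x = 0\<close>.\<close>
  have add_closed: "x + y \<in> H" if "x \<in> H" "y \<in> H" for x y
    using subgroup.m_closed[OF H(1) that] by (simp add: G_def)
  have "\<not> H \<subseteq> {0}"
  proof
    assume "H \<subseteq> {0}"
    then have "card H \<le> 1"
      using card_mono[of "{0}" H] by simp
    then show False
      using H(2) prime_gt_1_nat[OF r] by simp
  qed
  then obtain x where x: "x \<in> H" "x \<noteq> 0"
    by blast
  have "(\<lambda>y. x + y) ` H = H"
    by (rule endo_inj_surj) (auto simp: add_closed[OF x(1)])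
  then have "(\<Sum>y\<in>H. y) = sum (\<lambda>y. y) ((\<lambda>y. x + y) ` H)"
    by simp
  also have "\<dots> = (\<Sum>y\<in>H. x + y)"
    by (rule sum.reindex_cong[of "\<lambda>y. x + y"]) (auto simp: inj_on_def)
  finally have "of_nat r * x = 0"
    by (simp add: sum.distrib H(2))
  then have "CHAR('a) dvd r"
    using x(2) by (simp add: of_nat_eq_0_iff_char_dvd)
  moreover have "prime CHAR('a)"
    by (rule prime_CHAR_semidom[OF finite_imp_CHAR_pos]) simp
  ultimately show ?thesis
    using primes_dvd_imp_eq[OF _ r] by metis
qed

lemma dvd_card_imp_CHAR_power:
  assumes dvd: "n dvd CARD('a::{field,finite})"
  shows "n = CHAR('a) ^ multiplicity CHAR('a) n"
proof -
  let ?p = "CHAR('a)"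
  have "n > 0"
    using dvd finite_UNIV_card_ge_0[where 'a = 'a] by (auto intro!: gr0I)
  have "prime ?p"
    by (rule prime_CHAR_semidom[OF finite_imp_CHAR_pos]) simp
  have factors: "prime_factors n \<subseteq> {?p}"
    using dvd by (auto intro: prime_dvd_card_imp_eq_CHAR dvd_trans)
  have "n = (\<Prod>p\<in>prime_factors n. p ^ multiplicity p n)"
    by (rule prime_factorization_nat[OF \<open>n > 0\<close>])
  also have "\<dots> = (\<Prod>p\<in>{?p}. p ^ multiplicity p n)"
    using factors \<open>prime ?p\<close> \<open>n > 0\<close>
    by (intro prod.mono_neutral_left) (auto simp: not_dvd_imp_multiplicity_0 in_prime_factors_iff)
  finally show ?thesis
    by simp
qed

lemma frobenius_of_card_eq_square:
  fixes a b :: "'a::{field,finite}"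
  assumes card: "CARD('a) = q ^ 2"
  shows "(a + b) ^ q = a ^ q + b ^ q" and "(a ^ q) ^ q = a"
proof -
  have "q dvd CARD('a)"
    using card by simp
  then have "q = CHAR('a) ^ multiplicity CHAR('a) q"
    by (rule dvd_card_imp_CHAR_power)
  then show "(a + b) ^ q = a ^ q + b ^ q"
    by (intro freshmans_dream' prime_CHAR_semidom[OF finite_imp_CHAR_pos]) simp_all
  show "(a ^ q) ^ q = a"
    using power_card_eq_self[of a] by (simp add: card power2_eq_square power_mult)
qed

theorem mainTheorem5:
  fixes g1 g2 v1 v2 :: "'a::{field_gcd,finite} poly" and m q :: nat
  assumes "m > 0"
    and "lead_coeff g1 = 1" and "g1 dvd xm1 m"
    and "lead_coeff g2 = 1" and "g2 dvd xm1 m"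
    and "degree v1 < m" and "degree v2 < m"
    and "gcd (v1 * v2 - 1) (xm1 m) = 1"
  shows
    "(CARD('a) = q \<longrightarrow>
        dual m (euclid_ip m) (qc_code m g1 (v1 * g1) (v2 * g2) g2)
          = qc_code m (perp m g1) (- bar m v2 * perp m g1) (- bar m v1 * perp m g2) (perp m g2)
      \<and> dual m (symp_ip m) (qc_code m g1 (v1 * g1) (v2 * g2) g2)
          = qc_code m (perp m g2) (bar m v1 * perp m g2) (bar m v2 * perp m g1) (perp m g1))
     \<and> (CARD('a) = q ^ 2 \<longrightarrow>
        dual m (herm_ip q m) (qc_code m g1 (v1 * g1) (v2 * g2) g2)
          = qc_code m (perpH q m g1) (- frob q (bar m v2) * perpH q m g1)
                      (- frob q (bar m v1) * perpH q m g2) (perpH q m g2))"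
proof -
  obtain x where "[x * (v1 * v2 - 1) = 1] (mod xm1 m)"
    using cong_inverse_if_gcd_eq_1[OF assms(8)] by blast
  then have w: "[- x * (1 - v1 * v2) = 1] (mod xm1 m)"
    by (simp add: algebra_simps)
  note setting = assms(1-5) w
  show ?thesis
    using dual_euclid_qc_code[OF setting] dual_symp_qc_code[OF setting]
      dual_herm_qc_code[OF frobenius_of_card_eq_square setting] by blast
qed

end
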